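(* Let $(A,\mathcal N,\mathcal P,\lambda)$ be a game, $(\sigma,\phi)$ and $(\tau,\psi)$ uniform strategies on $A$, and $f:\sigma\to\tau$ a weak map of uniform strategies. Then: (1) $f$ is a map of event structures with symmetry $(\sigma,\mathcal S_\phi(\sigma))\to(\tau,\mathcal S_\psi(\tau))$; and (2) for every $x\in\mathrm{Conf}(\sigma)$ there exists $\theta\in\mathcal S_{\mathcal P}(A)$, $\theta:p_\sigma(x)\cong p_\tau(f(x))$, such that $\theta(p_\sigma(s))=p_\tau(f(s))$ for all $s\in x$.
   Context: Event structure: a set with a partial order $\leq$ with finitely many elements below each element, an irreflexive symmetric hereditary conflict $\#$ (if $a\leq a'$, $a\#b$ then $a'\#b$), and polarity into $\{-,+\}$. Configurations: finite down-closed conflict-free subsets, $\mathrm{Conf}(\cdot)$. $x\subseteq^+y$ (resp. $\subseteq^-$): $x\subseteq y$ with $y\setminus x$ all positive (resp. negative). Map of event structures: polarity-preserving function mapping configurations to configurations and injective on each configuration. Automorphism: bijection preserving and reflecting $\leq,\#$, polarity; it fixes $x$ if identity on $x$; negative if whenever it fixes $x$ and $x\subseteq^+y$ it fixes $y$; positive likewise with $\subseteq^-$. Group actions are homomorphisms into automorphism groups. A game $(A,\mathcal N,\mathcal P,\lambda)$: $\mathcal N$ a group acting on $A$ by negative automorphisms, $\mathcal P$ by positive automorphisms, $\lambda:\mathcal N\times\mathcal P\to\mathcal P\times\mathcal N$ with (i) $\lambda(e,\beta)=(\beta,e)$, $\lambda(\alpha,e)=(e,\alpha)$; (ii) if $\lambda(\alpha',\beta)=(\beta_1,\alpha_1)$,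 $\lambda(\alpha,\beta_1)=(\beta_2,\alpha_2)$ then $\lambda(\alpha\alpha',\beta)=(\beta_2,\alpha_2\alpha_1)$; (iii) if $\lambda(\alpha,\beta)=(\beta_1,\alpha_1)$, $\lambda(\alpha_1,\beta')=(\beta_2,\alpha_2)$ then $\lambda(\alpha,\beta\beta')=(\beta_1\beta_2,\alpha_2)$; (iv) if $\lambda(\alpha,\beta)=(\beta',\alpha')$ then $\alpha(\beta(a))=\beta'(\alpha'(a))$ for all $a$. For a group $G$ acting on $A$, $\mathcal S_G(A)$ is the set of bijections $x\cong g(x)$ ($x\in\mathrm{Conf}(A)$, $g\in G$) obtained by restricting $g$ to $x$. Strategy on $A$: event structure $\sigma$ with map $p_\sigma:\sigma\to A$ such that for every $x\in\mathrm{Conf}(\sigma)$: if $p_\sigma(x)\subseteq^-z$ there is a unique $y\in\mathrm{Conf}(\sigma)$ with $x\subseteq y$, $p_\sigma(y)=z$; if $z\subseteq^+p_\sigma(x)$ there is $y\subseteq x$ in $\mathrm{Conf}(\sigma)$ with $p_\sigma(y)=z$. Weak map $\sigma\to\tau$: a map $f$ with $f[x]\in\mathcal P$ ($x\in\mathrm{Conf}(\sigma)$) such that $f[x](p_\tau(f(s)))=p_\sigma(s)$ for $s\in x$. $\alpha\cdot\sigma$ is $\sigma$ with projection $\alpha\circ p_\sigma$. Uniform strategy: strategy $\sigma$ with weak maps $\phi_\alpha:\alpha\cdot\sigma\to\sigma$ ($\alpha\in\mathcal N$) such that for all $x$: $\phi_e(x)=x$, $\phi_e[x]=e$; and for all $\alpha,\alpha'$,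 with $y=\phi_\alpha(x)$, $(\gamma,\beta)=\lambda(\alpha',\phi_\alpha[x])$: $\phi_{\alpha'\alpha}(x)=\phi_\beta(y)$ and $\phi_{\alpha'\alpha}[x]=\gamma\,\phi_\beta[y]$. A weak map of uniform strategies $(\sigma,\phi)\to(\tau,\psi)$ is a weak map $f:\sigma\to\tau$ such that for all $\alpha\in\mathcal N$, $x\in\mathrm{Conf}(\sigma)$, writing $(\beta',\alpha')=\lambda(\alpha,f[x])$: $f(\phi_\alpha(x))=\psi_{\alpha'}(f(x))$ and $\phi_\alpha[x]\,f[\phi_\alpha(x)]=\beta'\,\psi_{\alpha'}[f(x)]$ (i.e. $x\mapsto(f[x],f(x))$ is a homomorphism of algebras for the lifting of the monad $\mathcal N\times(-)$ to the Kleisli category of $\mathcal P\times(-)$). $\mathcal S_\phi(\sigma)$ is the set of bijections $x\cong\phi_\alpha(x)$ obtained by restricting $\phi_\alpha$ to $x\in\mathrm{Conf}(\sigma)$, $\alpha\in\mathcal N$. A map of event structures with symmetry $(E,\mathcal S_E)\to(F,\mathcal S_F)$ (where $\mathcal S_E,\mathcal S_F$ are sets of bijections between configurations) is a map of event structures $f$ such that for every $\theta:x\cong y$ in $\mathcal S_E$ the bijection $f(x)\cong f(y)$, $f(a)\mapsto f(\theta(a))$, is in $\mathcal S_F$. *)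

theory Defs
  imports "HOL-Algebra.Group"
begin

text \<open>An event structure with polarity on events of type 'a: a carrier set, a partial
order, a conflict relation and a polarity (True = positive, False = negative).\<close>
record 'a es =
  events :: "'a set"
  ev_le :: "'a \<Rightarrow> 'a \<Rightarrow> bool"
  ev_cf :: "'a \<Rightarrow> 'a \<Rightarrow> bool"
  ev_pol :: "'a \<Rightarrow> bool"

definition is_es :: "'a es \<Rightarrow> bool" where
  "is_es E \<longleftrightarrow>
     (\<forall>a\<in>events E. ev_le E a a) \<and>
     (\<forall>a\<in>events E. \<forall>b\<in>events E. ev_le E a b \<and> ev_le E b a \<longrightarrow> a = b) \<and>
     (\<forall>a\<in>events E. \<forall>b\<in>events E. \<forall>c\<in>events E. ev_le E a b \<and> ev_le E b c \<longrightarrow> ev_le E a c) \<and>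
     (\<forall>a\<in>events E. finite {b\<in>events E. ev_le E b a}) \<and>
     (\<forall>a\<in>events E. \<not> ev_cf E a a) \<and>
     (\<forall>a\<in>events E. \<forall>b\<in>events E. ev_cf E a b \<longrightarrow> ev_cf E b a) \<and>
     (\<forall>a\<in>events E. \<forall>a'\<in>events E. \<forall>b\<in>events E. ev_le E a a' \<and> ev_cf E a b \<longrightarrow> ev_cf E a' b)"

definition Conf :: "'a es \<Rightarrow> 'a set set" where
  "Conf E = {x. finite x \<and> x \<subseteq> events E \<and>
                (\<forall>a\<in>x. \<forall>b\<in>events E. ev_le E b a \<longrightarrow> b \<in> x) \<and>
                (\<forall>a\<in>x. \<forall>b\<in>x. \<not> ev_cf E a b)}"

definition subset_pos :: "'a es \<Rightarrow> 'a set \<Rightarrow> 'a set \<Rightarrow> bool" where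
  "subset_pos E x y \<longleftrightarrow> x \<subseteq> y \<and> (\<forall>a\<in>y - x. ev_pol E a)"

definition subset_neg :: "'a es \<Rightarrow> 'a set \<Rightarrow> 'a set \<Rightarrow> bool" where
  "subset_neg E x y \<longleftrightarrow> x \<subseteq> y \<and> (\<forall>a\<in>y - x. \<not> ev_pol E a)"

definition es_map :: "'a es \<Rightarrow> 'b es \<Rightarrow> ('a \<Rightarrow> 'b) \<Rightarrow> bool" where
  "es_map E F f \<longleftrightarrow>
     (\<forall>a\<in>events E. ev_pol F (f a) = ev_pol E a) \<and>
     (\<forall>x\<in>Conf E. f ` x \<in> Conf F \<and> inj_on f x)"

definition es_aut :: "'a es \<Rightarrow> ('a \<Rightarrow> 'a) \<Rightarrow> bool" where
  "es_aut E g \<longleftrightarrow> bij_betw g (events E) (events E) \<and>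
     (\<forall>a\<in>events E. \<forall>b\<in>events E.
        (ev_le E (g a) (g b) \<longleftrightarrow> ev_le E a b) \<and> (ev_cf E (g a) (g b) \<longleftrightarrow> ev_cf E a b)) \<and>
     (\<forall>a\<in>events E. ev_pol E (g a) = ev_pol E a)"

definition fixes_conf :: "('a \<Rightarrow> 'a) \<Rightarrow> 'a set \<Rightarrow> bool" where
  "fixes_conf g x \<longleftrightarrow> (\<forall>a\<in>x. g a = a)"

definition neg_aut :: "'a es \<Rightarrow> ('a \<Rightarrow> 'a) \<Rightarrow> bool" where
  "neg_aut E g \<longleftrightarrow> es_aut E g \<and>
     (\<forall>x\<in>Conf E. \<forall>y\<in>Conf E. fixes_conf g x \<and> subset_pos E x y \<longrightarrow> fixes_conf g y)"

definition pos_aut :: "'a es \<Rightarrow> ('a \<Rightarrow> 'a) \<Rightarrow> bool" where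
  "pos_aut E g \<longleftrightarrow> es_aut E g \<and>
     (\<forall>x\<in>Conf E. \<forall>y\<in>Conf E. fixes_conf g x \<and> subset_neg E x y \<longrightarrow> fixes_conf g y)"

definition group_action_by ::
  "(('a \<Rightarrow> 'a) \<Rightarrow> bool) \<Rightarrow> 'g monoid \<Rightarrow> 'a es \<Rightarrow> ('g \<Rightarrow> 'a \<Rightarrow> 'a) \<Rightarrow> bool" where
  "group_action_by Q G E act \<longleftrightarrow> group G \<and>
     (\<forall>g\<in>carrier G. Q (act g)) \<and>
     (\<forall>a\<in>events E. act \<one>\<^bsub>G\<^esub> a = a) \<and>
     (\<forall>g\<in>carrier G. \<forall>h\<in>carrier G. \<forall>a\<in>events E. act (g \<otimes>\<^bsub>G\<^esub> h) a = act g (act h a))"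

definition game ::
  "'a es \<Rightarrow> 'n monoid \<Rightarrow> 'p monoid \<Rightarrow> ('n \<Rightarrow> 'a \<Rightarrow> 'a) \<Rightarrow> ('p \<Rightarrow> 'a \<Rightarrow> 'a)
   \<Rightarrow> ('n \<Rightarrow> 'p \<Rightarrow> 'p \<times> 'n) \<Rightarrow> bool" where
  "game A N P aN aP lam \<longleftrightarrow> is_es A \<and>
     group_action_by (neg_aut A) N A aN \<and>
     group_action_by (pos_aut A) P A aP \<and>
     (\<forall>\<alpha>\<in>carrier N. \<forall>\<beta>\<in>carrier P. lam \<alpha> \<beta> \<in> carrier P \<times> carrier N) \<and>
     (\<forall>\<beta>\<in>carrier P. lam \<one>\<^bsub>N\<^esub> \<beta> = (\<beta>, \<one>\<^bsub>N\<^esub>)) \<and>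
     (\<forall>\<alpha>\<in>carrier N. lam \<alpha> \<one>\<^bsub>P\<^esub> = (\<one>\<^bsub>P\<^esub>, \<alpha>)) \<and>
     (\<forall>\<alpha>\<in>carrier N. \<forall>\<alpha>'\<in>carrier N. \<forall>\<beta>\<in>carrier P.
        let (\<beta>1, \<alpha>1) = lam \<alpha>' \<beta>; (\<beta>2, \<alpha>2) = lam \<alpha> \<beta>1
        in lam (\<alpha> \<otimes>\<^bsub>N\<^esub> \<alpha>') \<beta> = (\<beta>2, \<alpha>2 \<otimes>\<^bsub>N\<^esub> \<alpha>1)) \<and>
     (\<forall>\<alpha>\<in>carrier N. \<forall>\<beta>\<in>carrier P. \<forall>\<beta>'\<in>carrier P.
        let (\<beta>1, \<alpha>1) = lam \<alpha> \<beta>; (\<beta>2, \<alpha>2) = lam \<alpha>1 \<beta>'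
        in lam \<alpha> (\<beta> \<otimes>\<^bsub>P\<^esub> \<beta>') = (\<beta>1 \<otimes>\<^bsub>P\<^esub> \<beta>2, \<alpha>2)) \<and>
     (\<forall>\<alpha>\<in>carrier N. \<forall>\<beta>\<in>carrier P.
        let (\<beta>', \<alpha>') = lam \<alpha> \<beta>
        in \<forall>a\<in>events A. aN \<alpha> (aP \<beta> a) = aP \<beta>' (aN \<alpha>' a))"

text \<open>Bijections between configurations are represented by their graphs
  (sets of pairs).  S_G(A): restrictions of g to configurations x.\<close>
definition sym_of_action :: "'g monoid \<Rightarrow> ('g \<Rightarrow> 'a \<Rightarrow> 'a) \<Rightarrow> 'a es \<Rightarrow> ('a \<times> 'a) set set" where
  "sym_of_action G act A = {{(a, act g a) | a. a \<in> x} | g x. g \<in> carrier G \<and> x \<in> Conf A}"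

definition strategy :: "'a es \<Rightarrow> 's es \<Rightarrow> ('s \<Rightarrow> 'a) \<Rightarrow> bool" where
  "strategy A S p \<longleftrightarrow> is_es S \<and> es_map S A p \<and>
     (\<forall>x\<in>Conf S.
        (\<forall>z\<in>Conf A. subset_neg A (p ` x) z \<longrightarrow> (\<exists>!y. y \<in> Conf S \<and> x \<subseteq> y \<and> p ` y = z)) \<and>
        (\<forall>z\<in>Conf A. subset_pos A z (p ` x) \<longrightarrow> (\<exists>y\<in>Conf S. y \<subseteq> x \<and> p ` y = z)))"

text \<open>Weak map (f, f[-]) from S (projection p) to T (projection q).\<close>
definition weak_map ::
  "'p monoid \<Rightarrow> ('p \<Rightarrow> 'a \<Rightarrow> 'a) \<Rightarrow> 's es \<Rightarrow> ('s \<Rightarrow> 'a) \<Rightarrow> 't es \<Rightarrow> ('t \<Rightarrow> 'a)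
   \<Rightarrow> ('s \<Rightarrow> 't) \<Rightarrow> ('s set \<Rightarrow> 'p) \<Rightarrow> bool" where
  "weak_map P aP S p T q f fb \<longleftrightarrow> es_map S T f \<and>
     (\<forall>x\<in>Conf S. fb x \<in> carrier P \<and> (\<forall>s\<in>x. aP (fb x) (q (f s)) = p s))"

definition uniform_strategy ::
  "'a es \<Rightarrow> 'n monoid \<Rightarrow> 'p monoid \<Rightarrow> ('n \<Rightarrow> 'a \<Rightarrow> 'a) \<Rightarrow> ('p \<Rightarrow> 'a \<Rightarrow> 'a)
   \<Rightarrow> ('n \<Rightarrow> 'p \<Rightarrow> 'p \<times> 'n) \<Rightarrow> 's es \<Rightarrow> ('s \<Rightarrow> 'a)
   \<Rightarrow> ('n \<Rightarrow> 's \<Rightarrow> 's) \<Rightarrow> ('n \<Rightarrow> 's set \<Rightarrow> 'p) \<Rightarrow> bool" where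
  "uniform_strategy A N P aN aP lam S p \<phi> \<phi>b \<longleftrightarrow> strategy A S p \<and>
     (\<forall>\<alpha>\<in>carrier N. weak_map P aP S (aN \<alpha> \<circ> p) S p (\<phi> \<alpha>) (\<phi>b \<alpha>)) \<and>
     (\<forall>x\<in>Conf S. \<phi> \<one>\<^bsub>N\<^esub> ` x = x \<and> \<phi>b \<one>\<^bsub>N\<^esub> x = \<one>\<^bsub>P\<^esub>) \<and>
     (\<forall>\<alpha>\<in>carrier N. \<forall>\<alpha>'\<in>carrier N. \<forall>x\<in>Conf S.
        let y = \<phi> \<alpha> ` x; (\<gamma>, \<beta>) = lam \<alpha>' (\<phi>b \<alpha> x)
        in \<phi> (\<alpha>' \<otimes>\<^bsub>N\<^esub> \<alpha>) ` x = \<phi> \<beta> ` y \<and>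
           \<phi>b (\<alpha>' \<otimes>\<^bsub>N\<^esub> \<alpha>) x = \<gamma> \<otimes>\<^bsub>P\<^esub> \<phi>b \<beta> y)"

definition uniform_weak_map ::
  "'a es \<Rightarrow> 'n monoid \<Rightarrow> 'p monoid \<Rightarrow> ('n \<Rightarrow> 'a \<Rightarrow> 'a) \<Rightarrow> ('p \<Rightarrow> 'a \<Rightarrow> 'a)
   \<Rightarrow> ('n \<Rightarrow> 'p \<Rightarrow> 'p \<times> 'n)
   \<Rightarrow> 's es \<Rightarrow> ('s \<Rightarrow> 'a) \<Rightarrow> ('n \<Rightarrow> 's \<Rightarrow> 's) \<Rightarrow> ('n \<Rightarrow> 's set \<Rightarrow> 'p)
   \<Rightarrow> 't es \<Rightarrow> ('t \<Rightarrow> 'a) \<Rightarrow> ('n \<Rightarrow> 't \<Rightarrow> 't) \<Rightarrow> ('n \<Rightarrow> 't set \<Rightarrow> 'p)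
   \<Rightarrow> ('s \<Rightarrow> 't) \<Rightarrow> ('s set \<Rightarrow> 'p) \<Rightarrow> bool" where
  "uniform_weak_map A N P aN aP lam S p \<phi> \<phi>b T q \<psi> \<psi>b f fb \<longleftrightarrow>
     weak_map P aP S p T q f fb \<and>
     (\<forall>\<alpha>\<in>carrier N. \<forall>x\<in>Conf S.
        let (\<beta>', \<alpha>') = lam \<alpha> (fb x)
        in f ` (\<phi> \<alpha> ` x) = \<psi> \<alpha>' ` (f ` x) \<and>
           \<phi>b \<alpha> x \<otimes>\<^bsub>P\<^esub> fb (\<phi> \<alpha> ` x) = \<beta>' \<otimes>\<^bsub>P\<^esub> \<psi>b \<alpha>' (f ` x))"

definition sym_of_uniform :: "'n monoid \<Rightarrow> ('n \<Rightarrow> 's \<Rightarrow> 's) \<Rightarrow> 's es \<Rightarrow> ('s \<times> 's) set set" where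
  "sym_of_uniform N \<phi> S = {{(s, \<phi> \<alpha> s) | s. s \<in> x} | \<alpha> x. \<alpha> \<in> carrier N \<and> x \<in> Conf S}"

definition es_sym_map ::
  "'a es \<Rightarrow> ('a \<times> 'a) set set \<Rightarrow> 'b es \<Rightarrow> ('b \<times> 'b) set set \<Rightarrow> ('a \<Rightarrow> 'b) \<Rightarrow> bool" where
  "es_sym_map E SE F SF f \<longleftrightarrow> es_map E F f \<and>
     (\<forall>\<theta>\<in>SE. {(f a, f b) | a b. (a, b) \<in> \<theta>} \<in> SF)"

end

theory Submission
  imports Defs
begin

(* Part (2) only needs the weak map property: f[x] moves q (f s) to p s, so the inverse
   of f[x], restricted to p x, is the required positive symmetry.
   For part (1), fix alpha and x and let lambda(alpha, f[x]) = (beta', alpha').  Uniformity of f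
   says that f o phi_alpha and psi_alpha' o f have the same image of x and, via axiom (iv) of the
   game, that after projecting to A and acting by one and the same element of P both become
   alpha o p_sigma on x.  Since the action is injective and the projection is injective on
   configurations, f o phi_alpha = psi_alpha' o f on x, so f sends the symmetry phi_alpha|x to
   the symmetry psi_alpha'|(f x). *)

lemma Conf_subset_events: "x \<in> Conf E \<Longrightarrow> x \<subseteq> events E"
  unfolding Conf_def by blast

lemma es_map_Conf: "es_map E F f \<Longrightarrow> x \<in> Conf E \<Longrightarrow> f ` x \<in> Conf F"
  unfolding es_map_def by blast

lemma es_map_inj_on: "es_map E F f \<Longrightarrow> x \<in> Conf E \<Longrightarrow> inj_on f x"
  unfolding es_map_def by blast

lemma es_map_in_events: "es_map E F f \<Longrightarrow> x \<in> Conf E \<Longrightarrow> s \<in> x \<Longrightarrow> f s \<in> events F"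
  using Conf_subset_events es_map_Conf by blast

lemma group_action_by_group: "group_action_by Q G E act \<Longrightarrow> group G"
  unfolding group_action_by_def by blast

lemma group_action_by_one: "group_action_by Q G E act \<Longrightarrow> a \<in> events E \<Longrightarrow> act \<one>\<^bsub>G\<^esub> a = a"
  unfolding group_action_by_def by blast

lemma group_action_by_mult:
  "group_action_by Q G E act \<Longrightarrow> g \<in> carrier G \<Longrightarrow> h \<in> carrier G \<Longrightarrow> a \<in> events E
    \<Longrightarrow> act (g \<otimes>\<^bsub>G\<^esub> h) a = act g (act h a)"
  unfolding group_action_by_def by blast

lemma group_action_by_inv_cancel:
  assumes act: "group_action_by Q G E act" and g: "g \<in> carrier G" and a: "a \<in> events E"
  shows "act (inv\<^bsub>G\<^esub> g) (act g a) = a"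
proof -
  have G: "group G" using group_action_by_group[OF act] .
  have "act (inv\<^bsub>G\<^esub> g) (act g a) = act (inv\<^bsub>G\<^esub> g \<otimes>\<^bsub>G\<^esub> g) a"
    using group_action_by_mult[OF act _ g a] group.inv_closed[OF G g] by simp
  also have "\<dots> = a"
    using group.l_inv[OF G g] group_action_by_one[OF act a] by simp
  finally show ?thesis .
qed

lemma group_action_by_inj_on:
  "group_action_by Q G E act \<Longrightarrow> g \<in> carrier G \<Longrightarrow> inj_on (act g) (events E)"
  by (metis group_action_by_inv_cancel inj_on_inverseI)

lemma es_map_action_cancel:
  assumes act: "group_action_by Q G A act" and q: "es_map T A q" and z: "z \<in> Conf T"
    and t: "t \<in> z" and t': "t' \<in> z" and g: "g \<in> carrier G"
    and eq: "act g (q t) = act g (q t')"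
  shows "t = t'"
proof -
  have "q t = q t'"
    using inj_onD[OF group_action_by_inj_on[OF act g] eq]
      es_map_in_events[OF q z t] es_map_in_events[OF q z t'] .
  then show ?thesis using inj_onD[OF es_map_inj_on[OF q z]] t t' by blast
qed

lemma game_pos_action: "game A N P aN aP lam \<Longrightarrow> group_action_by (pos_aut A) P A aP"
  unfolding game_def by (elim conjE)

lemma game_lam_closed:
  assumes "game A N P aN aP lam" "\<alpha> \<in> carrier N" "\<beta> \<in> carrier P" "lam \<alpha> \<beta> = (\<beta>', \<alpha>')"
  shows "\<beta>' \<in> carrier P" and "\<alpha>' \<in> carrier N"
proof -
  have "lam \<alpha> \<beta> \<in> carrier P \<times> carrier N"
    using assms(1-3) unfolding game_def by (elim conjE) blast
  then show "\<beta>' \<in> carrier P" and "\<alpha>' \<in> carrier N" using assms(4) by simp_all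
qed

lemma game_lam_commute:
  assumes "game A N P aN aP lam" "\<alpha> \<in> carrier N" "\<beta> \<in> carrier P" "lam \<alpha> \<beta> = (\<beta>', \<alpha>')"
    and "a \<in> events A"
  shows "aN \<alpha> (aP \<beta> a) = aP \<beta>' (aN \<alpha>' a)"
proof -
  have "let (\<beta>', \<alpha>') = lam \<alpha> \<beta> in \<forall>a\<in>events A. aN \<alpha> (aP \<beta> a) = aP \<beta>' (aN \<alpha>' a)"
    using assms(1-3) unfolding game_def by (elim conjE) blast
  then show ?thesis using assms(4,5) by simp
qed

lemma uniform_strategy_es_map: "uniform_strategy A N P aN aP lam S p \<phi> \<phi>b \<Longrightarrow> es_map S A p"
  unfolding uniform_strategy_def strategy_def by (elim conjE)

lemma uniform_strategy_weak_map:
  "uniform_strategy A N P aN aP lam S p \<phi> \<phi>b \<Longrightarrow> \<alpha> \<in> carrier N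
    \<Longrightarrow> weak_map P aP S (aN \<alpha> \<circ> p) S p (\<phi> \<alpha>) (\<phi>b \<alpha>)"
  unfolding uniform_strategy_def by (elim conjE) blast

lemma weak_map_es_map: "weak_map P aP S p T q f fb \<Longrightarrow> es_map S T f"
  unfolding weak_map_def by blast

lemma weak_map_label_closed: "weak_map P aP S p T q f fb \<Longrightarrow> x \<in> Conf S \<Longrightarrow> fb x \<in> carrier P"
  unfolding weak_map_def by blast

lemma weak_map_label_action:
  "weak_map P aP S p T q f fb \<Longrightarrow> x \<in> Conf S \<Longrightarrow> s \<in> x \<Longrightarrow> aP (fb x) (q (f s)) = p s"
  unfolding weak_map_def by blast

lemma uniform_weak_map_weak_map:
  "uniform_weak_map A N P aN aP lam S p \<phi> \<phi>b T q \<psi> \<psi>b f fb \<Longrightarrow> weak_map P aP S p T q f fb"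
  unfolding uniform_weak_map_def by (elim conjE)

lemma uniform_weak_map_uniform:
  assumes "uniform_weak_map A N P aN aP lam S p \<phi> \<phi>b T q \<psi> \<psi>b f fb"
    and "\<alpha> \<in> carrier N" "x \<in> Conf S" "lam \<alpha> (fb x) = (\<beta>', \<alpha>')"
  shows "f ` \<phi> \<alpha> ` x = \<psi> \<alpha>' ` f ` x"
    and "\<phi>b \<alpha> x \<otimes>\<^bsub>P\<^esub> fb (\<phi> \<alpha> ` x) = \<beta>' \<otimes>\<^bsub>P\<^esub> \<psi>b \<alpha>' (f ` x)"
proof -
  have "let (\<beta>', \<alpha>') = lam \<alpha> (fb x)
        in f ` \<phi> \<alpha> ` x = \<psi> \<alpha>' ` f ` x \<and> \<phi>b \<alpha> x \<otimes>\<^bsub>P\<^esub> fb (\<phi> \<alpha> ` x) = \<beta>' \<otimes>\<^bsub>P\<^esub> \<psi>b \<alpha>' (f ` x)"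
    using assms(1-3) unfolding uniform_weak_map_def by (elim conjE) blast
  then show "f ` \<phi> \<alpha> ` x = \<psi> \<alpha>' ` f ` x"
    and "\<phi>b \<alpha> x \<otimes>\<^bsub>P\<^esub> fb (\<phi> \<alpha> ` x) = \<beta>' \<otimes>\<^bsub>P\<^esub> \<psi>b \<alpha>' (f ` x)"
    using assms(4) by simp_all
qed

lemma weak_map_sym_of_action:
  assumes act: "group_action_by Q P A aP" and f: "weak_map P aP S p T q f fb"
    and p: "es_map S A p" and q: "es_map T A q" and x: "x \<in> Conf S"
  shows "\<exists>\<theta>\<in>sym_of_action P aP A.
           fst ` \<theta> = p ` x \<and> snd ` \<theta> = q ` f ` x \<and> (\<forall>s\<in>x. (p s, q (f s)) \<in> \<theta>)"
proof -
  define g where "g = inv\<^bsub>P\<^esub> (fb x)"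
  have fbx: "fb x \<in> carrier P" using weak_map_label_closed[OF f x] .
  have g: "g \<in> carrier P"
    unfolding g_def using group.inv_closed[OF group_action_by_group[OF act] fbx] .
  have g_p: "aP g (p s) = q (f s)" if s: "s \<in> x" for s
  proof -
    have "q (f s) \<in> events A"
      using es_map_in_events[OF q es_map_Conf[OF weak_map_es_map[OF f] x]] s by blast
    then show ?thesis
      using weak_map_label_action[OF f x s] group_action_by_inv_cancel[OF act fbx]
      unfolding g_def by metis
  qed
  define \<theta> where "\<theta> = {(a, aP g a) | a. a \<in> p ` x}"
  have "\<theta> \<in> sym_of_action P aP A"
    unfolding sym_of_action_def \<theta>_def using g es_map_Conf[OF p x] by blast
  moreover have "fst ` \<theta> = p ` x" "snd ` \<theta> = q ` f ` x" "\<forall>s\<in>x. (p s, q (f s)) \<in> \<theta>"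
    unfolding \<theta>_def using g_p by force+
  ultimately show ?thesis by blast
qed

lemma uniform_weak_map_commute:
  assumes game: "game A N P aN aP lam"
    and \<sigma>: "uniform_strategy A N P aN aP lam S p \<phi> \<phi>b"
    and \<tau>: "uniform_strategy A N P aN aP lam T q \<psi> \<psi>b"
    and f: "uniform_weak_map A N P aN aP lam S p \<phi> \<phi>b T q \<psi> \<psi>b f fb"
    and \<alpha>: "\<alpha> \<in> carrier N" and x: "x \<in> Conf S" and lam: "lam \<alpha> (fb x) = (\<beta>', \<alpha>')"
    and s: "s \<in> x"
  shows "f (\<phi> \<alpha> s) = \<psi> \<alpha>' (f s)"
proof -
  have act: "group_action_by (pos_aut A) P A aP" using game_pos_action[OF game] .
  have fw: "weak_map P aP S p T q f fb" using uniform_weak_map_weak_map[OF f] .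
  have \<phi>\<alpha>: "weak_map P aP S (aN \<alpha> \<circ> p) S p (\<phi> \<alpha>) (\<phi>b \<alpha>)"
    using uniform_strategy_weak_map[OF \<sigma> \<alpha>] .
  have fbx: "fb x \<in> carrier P" using weak_map_label_closed[OF fw x] .
  note \<beta>' = game_lam_closed(1)[OF game \<alpha> fbx lam]
    and \<alpha>' = game_lam_closed(2)[OF game \<alpha> fbx lam]
  have \<psi>\<alpha>': "weak_map P aP T (aN \<alpha>' \<circ> q) T q (\<psi> \<alpha>') (\<psi>b \<alpha>')"
    using uniform_strategy_weak_map[OF \<tau> \<alpha>'] .
  have q: "es_map T A q" using uniform_strategy_es_map[OF \<tau>] .
  define y where "y = \<phi> \<alpha> ` x"
  have y: "y \<in> Conf S" unfolding y_def using es_map_Conf[OF weak_map_es_map[OF \<phi>\<alpha>] x] .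
  have ys: "\<phi> \<alpha> s \<in> y" unfolding y_def using s by blast
  have fx: "f ` x \<in> Conf T" using es_map_Conf[OF weak_map_es_map[OF fw] x] .
  have fs: "f s \<in> f ` x" using s by blast
  define z where "z = \<psi> \<alpha>' ` f ` x"
  have z: "z \<in> Conf T" unfolding z_def using es_map_Conf[OF weak_map_es_map[OF \<psi>\<alpha>'] fx] .
  have in_z: "f (\<phi> \<alpha> s) \<in> z" "\<psi> \<alpha>' (f s) \<in> z"
    unfolding z_def using uniform_weak_map_uniform(1)[OF f \<alpha> x lam] s by (blast, blast)
  have in_A: "q (f (\<phi> \<alpha> s)) \<in> events A" "q (\<psi> \<alpha>' (f s)) \<in> events A" "q (f s) \<in> events A"
    using es_map_in_events[OF q z in_z(1)] es_map_in_events[OF q z in_z(2)]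
      es_map_in_events[OF q fx fs] .
  have \<phi>b: "\<phi>b \<alpha> x \<in> carrier P" using weak_map_label_closed[OF \<phi>\<alpha> x] .
  have fby: "fb y \<in> carrier P" using weak_map_label_closed[OF fw y] .
  have \<psi>b: "\<psi>b \<alpha>' (f ` x) \<in> carrier P" using weak_map_label_closed[OF \<psi>\<alpha>' fx] .
  define H where "H = \<phi>b \<alpha> x \<otimes>\<^bsub>P\<^esub> fb y"
  have H: "H \<in> carrier P"
    unfolding H_def using monoid.m_closed[OF group.is_monoid[OF group_action_by_group[OF act]] \<phi>b fby] .
  have "aP H (q (f (\<phi> \<alpha> s))) = aP (\<phi>b \<alpha> x) (aP (fb y) (q (f (\<phi> \<alpha> s))))"
    unfolding H_def using group_action_by_mult[OF act \<phi>b fby in_A(1)] .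
  also have "\<dots> = aN \<alpha> (p s)"
    using weak_map_label_action[OF fw y ys] weak_map_label_action[OF \<phi>\<alpha> x s] by simp
  also have "\<dots> = aN \<alpha> (aP (fb x) (q (f s)))"
    using weak_map_label_action[OF fw x s] by simp
  also have "\<dots> = aP \<beta>' (aN \<alpha>' (q (f s)))"
    using game_lam_commute[OF game \<alpha> fbx lam in_A(3)] .
  also have "\<dots> = aP \<beta>' (aP (\<psi>b \<alpha>' (f ` x)) (q (\<psi> \<alpha>' (f s))))"
    using weak_map_label_action[OF \<psi>\<alpha>' fx fs] by simp
  also have "\<dots> = aP H (q (\<psi> \<alpha>' (f s)))"
    unfolding H_def y_def uniform_weak_map_uniform(2)[OF f \<alpha> x lam]
    using group_action_by_mult[OF act \<beta>' \<psi>b in_A(2)] by simp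
  finally show ?thesis by (rule es_map_action_cancel[OF act q z in_z H])
qed

lemma uniform_weak_map_es_sym_map:
  assumes game: "game A N P aN aP lam"
    and \<sigma>: "uniform_strategy A N P aN aP lam S p \<phi> \<phi>b"
    and \<tau>: "uniform_strategy A N P aN aP lam T q \<psi> \<psi>b"
    and f: "uniform_weak_map A N P aN aP lam S p \<phi> \<phi>b T q \<psi> \<psi>b f fb"
  shows "es_sym_map S (sym_of_uniform N \<phi> S) T (sym_of_uniform N \<psi> T) f"
  unfolding es_sym_map_def
proof (intro conjI ballI)
  have fw: "weak_map P aP S p T q f fb" using uniform_weak_map_weak_map[OF f] .
  show "es_map S T f" using weak_map_es_map[OF fw] .
  fix \<theta> assume "\<theta> \<in> sym_of_uniform N \<phi> S"
  then obtain \<alpha> x where \<alpha>: "\<alpha> \<in> carrier N" and x: "x \<in> Conf S"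
    and \<theta>: "\<theta> = {(s, \<phi> \<alpha> s) | s. s \<in> x}"
    unfolding sym_of_uniform_def by blast
  obtain \<beta>' \<alpha>' where lam: "lam \<alpha> (fb x) = (\<beta>', \<alpha>')" by fastforce
  have \<alpha>': "\<alpha>' \<in> carrier N"
    using game_lam_closed(2)[OF game \<alpha> weak_map_label_closed[OF fw x] lam] .
  have "{(f a, f b) | a b. (a, b) \<in> \<theta>} = {(t, \<psi> \<alpha>' t) | t. t \<in> f ` x}"
    unfolding \<theta> using uniform_weak_map_commute[OF game \<sigma> \<tau> f \<alpha> x lam] by auto
  then show "{(f a, f b) | a b. (a, b) \<in> \<theta>} \<in> sym_of_uniform N \<psi> T"
    unfolding sym_of_uniform_def using \<alpha>' es_map_Conf[OF weak_map_es_map[OF fw] x] by blast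
qed

theorem mainTheorem9:
  fixes A :: "'a es" and N :: "'n monoid" and P :: "'p monoid"
    and aN :: "'n \<Rightarrow> 'a \<Rightarrow> 'a" and aP :: "'p \<Rightarrow> 'a \<Rightarrow> 'a"
    and lam :: "'n \<Rightarrow> 'p \<Rightarrow> 'p \<times> 'n"
    and S :: "'s es" and p :: "'s \<Rightarrow> 'a" and \<phi> :: "'n \<Rightarrow> 's \<Rightarrow> 's" and \<phi>b :: "'n \<Rightarrow> 's set \<Rightarrow> 'p"
    and T :: "'t es" and q :: "'t \<Rightarrow> 'a" and \<psi> :: "'n \<Rightarrow> 't \<Rightarrow> 't" and \<psi>b :: "'n \<Rightarrow> 't set \<Rightarrow> 'p"
    and f :: "'s \<Rightarrow> 't" and fb :: "'s set \<Rightarrow> 'p"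
  assumes "game A N P aN aP lam"
    and "uniform_strategy A N P aN aP lam S p \<phi> \<phi>b"
    and "uniform_strategy A N P aN aP lam T q \<psi> \<psi>b"
    and "uniform_weak_map A N P aN aP lam S p \<phi> \<phi>b T q \<psi> \<psi>b f fb"
  shows "es_sym_map S (sym_of_uniform N \<phi> S) T (sym_of_uniform N \<psi> T) f \<and>
         (\<forall>x\<in>Conf S. \<exists>\<theta>\<in>sym_of_action P aP A.
             fst ` \<theta> = p ` x \<and> snd ` \<theta> = q ` (f ` x) \<and>
             (\<forall>s\<in>x. (p s, q (f s)) \<in> \<theta>))"
  using uniform_weak_map_es_sym_map[OF assms]
    weak_map_sym_of_action[OF game_pos_action[OF assms(1)] uniform_weak_map_weak_map[OF assms(4)]
      uniform_strategy_es_map[OF assms(2)] uniform_strategy_es_map[OF assms(3)]]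
  by blast

end
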